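(* Given $\lambda\in(0,1-q^{-1})$, $m=cm'\geq cm''s$ with $c,m',m'',s\in\mathbb{N}$ and $c>1/(1-H_q(\lambda))$, it is possible to exactly recover any $\mathbf x\in\mathcal{S}_q$ from $\mathbf y=\mathbf A\mathbf x+\mathbf n$ with probability at least $1-P_e$ if $\mathbf A=\mathbf G\mathbf A'$, where $\mathbf G$ is the generator matrix of an $[m,m',d]_q$ linear code achieving probability of error at most $P_e$ over the $q$-ary symmetric channel with crossover probability $\lambda$, and some set of $m''s$ rows of $\mathbf A'$ forms a matrix $\mathbf A''$ such that $\phi_s(\mathbf A'')$ is the parity check matrix of an $[n,n-m'',d']_{q^s}$ linear code with $d'>2b$.
   Context: Let $q$ be a prime or prime power, $\mathbb F_q$ the finite field with $q$ elements, and $b<n$ positive integers. $\mathcal S_q$ denotes the set of vectors $\mathbf x\in\mathbb F_q^n$ with at most $b$ nonzero entries (the finite alphabet of size $q$, containing $0$, is identified with $\mathbb F_q$ via a bijection sending $0$ to the zero of $\mathbb F_q$). Measurements are $\mathbf y=\mathbf A\mathbf x+\mathbf n$ with sensing matrix $\mathbf A\in\mathbb F_q^{m\times n}$, where the noise $\mathbf n\in\mathbb F_q^m$ is generated by $m$ independent uses of a $q$-ary symmetric channel with crossover probability $\lambda$: each entry equals $0$ with probability $1-\lambda$ and each nonzero $a\in\mathbb F_q$ with probability $\lambda/(q-1)$. An $[N,K,D]_q$ code is a linear code over $\mathbb F_q$ of length $N$, with $q^K$ codewords and minimum Hamming distance $D$. A linear code achieves probability of error at most $P_e$ over a channel if,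 for every codeword, the probability that a nearest-neighbor-codeword decoder decodes it erroneously (given it was sent) is at most $P_e$. $H_q(x)=-x\log_q x-(1-x)\log_q(1-x)+x\log_q(q-1)$ for $x\in(0,1)$. Field lifting: fix a primitive polynomial of degree $s$ over $\mathbb F_q$ with root $\alpha$, a primitive element of $\mathbb F_{q^s}$; for a matrix $\mathbf C=[c_{ij}]\in\mathbb F_q^{Ms\times n}$, $\phi_s(\mathbf C)=[c'_{kl}]\in\mathbb F_{q^s}^{M\times n}$ with $c'_{kl}=\sum_{t=0}^{s-1}c_{(k-1)s+t+1,l}\,\alpha^t$ (the $k$-th row combines the $s$ consecutive rows of block $k$ with weights $1,\alpha,\ldots,\alpha^{s-1}$). *)

theory Defs
  imports "Jordan_Normal_Form.Matrix" "HOL-Computational_Algebra.Polynomial"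
    "HOL-Computational_Algebra.Factorial_Ring"
begin

definition Hq :: "nat \<Rightarrow> real \<Rightarrow> real" where
  "Hq q x = - x * log q x - (1 - x) * log q (1 - x) + x * log q (real q - 1)"

definition hamming_wt :: "'a::zero vec \<Rightarrow> nat" where
  "hamming_wt v = card {i. i < dim_vec v \<and> v $ i \<noteq> 0}"

definition hamming_dist :: "'a vec \<Rightarrow> 'a vec \<Rightarrow> nat" where
  "hamming_dist u v = card {i. i < dim_vec u \<and> u $ i \<noteq> v $ i}"

definition sparse_vecs :: "nat \<Rightarrow> nat \<Rightarrow> 'a::zero vec set" where
  "sparse_vecs n b = {x \<in> carrier_vec n. hamming_wt x \<le> b}"

(* probability of a noise vector of length dim_vec v under m independent uses
   of the q-ary symmetric channel with crossover probability lam *)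
definition sym_noise_prob :: "real \<Rightarrow> 'a::{zero,finite} vec \<Rightarrow> real" where
  "sym_noise_prob lam v =
     (\<Prod>i<dim_vec v. if v $ i = 0 then 1 - lam else lam / (real (card (UNIV :: 'a set)) - 1))"

definition noise_event_prob :: "real \<Rightarrow> nat \<Rightarrow> ('a::{zero,finite} vec \<Rightarrow> bool) \<Rightarrow> real" where
  "noise_event_prob lam N E = (\<Sum>v \<in> {v \<in> carrier_vec N. E v}. sym_noise_prob lam v)"

definition gen_code :: "'a::comm_ring_1 mat \<Rightarrow> 'a vec set" where
  "gen_code G = {G *\<^sub>v u | u. u \<in> carrier_vec (dim_col G)}"

definition min_dist :: "'a vec set \<Rightarrow> nat" where
  "min_dist C = Inf {hamming_dist c c' | c c'. c \<in> C \<and> c' \<in> C \<and> c \<noteq> c'}"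

definition is_generator_matrix :: "'a::{field,finite} mat \<Rightarrow> nat \<Rightarrow> nat \<Rightarrow> nat \<Rightarrow> bool" where
  "is_generator_matrix G N K D \<longleftrightarrow>
     G \<in> carrier_mat N K \<and> card (gen_code G) = card (UNIV :: 'a set) ^ K \<and> min_dist (gen_code G) = D"

definition null_code :: "'a::comm_ring_1 mat \<Rightarrow> nat \<Rightarrow> 'a vec set" where
  "null_code H N = {v \<in> carrier_vec N. H *\<^sub>v v = 0\<^sub>v (dim_row H)}"

definition is_parity_check_matrix :: "'a::{field,finite} mat \<Rightarrow> nat \<Rightarrow> nat \<Rightarrow> nat \<Rightarrow> bool" where
  "is_parity_check_matrix H N K D \<longleftrightarrow>
     dim_col H = N \<and> card (null_code H N) = card (UNIV :: 'a set) ^ K \<and> min_dist (null_code H N) = D"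

definition is_nn_decoder :: "'a vec set \<Rightarrow> nat \<Rightarrow> ('a vec \<Rightarrow> 'a vec) \<Rightarrow> bool" where
  "is_nn_decoder C N dec \<longleftrightarrow>
     (\<forall>r \<in> carrier_vec N. dec r \<in> C \<and> (\<forall>c \<in> C. hamming_dist r (dec r) \<le> hamming_dist r c))"

definition achieves_error :: "'a::{field,finite} vec set \<Rightarrow> nat \<Rightarrow> real \<Rightarrow> real \<Rightarrow> bool" where
  "achieves_error C N lam Pe \<longleftrightarrow>
     (\<exists>dec. is_nn_decoder C N dec \<and>
        (\<forall>c \<in> C. noise_event_prob lam N (\<lambda>e. dec (c + e) \<noteq> c) \<le> Pe))"

definition field_embedding :: "('a::field \<Rightarrow> 'b::field) \<Rightarrow> bool" where
  "field_embedding emb \<longleftrightarrow>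
     (\<forall>x y. emb (x + y) = emb x + emb y \<and> emb (x * y) = emb x * emb y) \<and> emb 1 = 1"

definition primitive_element :: "'b::{field,finite} \<Rightarrow> bool" where
  "primitive_element alpha \<longleftrightarrow> (\<forall>x. x \<noteq> 0 \<longrightarrow> (\<exists>k::nat. x = alpha ^ k))"

definition primitive_poly_root ::
    "('a::{field,finite} \<Rightarrow> 'b::{field,finite}) \<Rightarrow> nat \<Rightarrow> 'a poly \<Rightarrow> 'b \<Rightarrow> bool" where
  "primitive_poly_root emb s p alpha \<longleftrightarrow>
     lead_coeff p = 1 \<and> degree p = s \<and> irreducible p \<and> poly (map_poly emb p) alpha = 0
     \<and> primitive_element alpha"

(* field lifting phi_s : F_q^{Ms x n} \<rightarrow> F_{q^s}^{M x n} (0-based indices) *)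
definition field_lift ::
    "('a \<Rightarrow> 'b::comm_ring_1) \<Rightarrow> nat \<Rightarrow> 'b \<Rightarrow> 'a mat \<Rightarrow> 'b mat" where
  "field_lift emb s alpha C =
     mat (dim_row C div s) (dim_col C)
       (\<lambda>(k, l). \<Sum>t<s. emb (C $$ (k * s + t, l)) * alpha ^ t)"

end

theory Submission imports Defs "Berlekamp_Zassenhaus.Berlekamp_Type_Based" begin

text \<open>Decoding the channel output with the outer code recovers the codeword \<open>G (A' x)\<close>, and
  hence \<open>A' x\<close>, with probability at least \<open>1 - Pe\<close>.  It remains to see that \<open>x \<mapsto> A' x\<close> is injective
  on \<open>b\<close>-sparse vectors: if \<open>A' x = A' x'\<close>, the selected rows \<open>A''\<close> annihilate \<open>v = x - x'\<close>, so
  \<open>\<phi>\<^sub>s(A'')\<close> annihilates the image of \<open>v\<close> under the embedding of the fields.  That image is a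
  codeword of weight at most \<open>2b < d'\<close>, hence zero.\<close>

lemma card_UNIV_field_ge_2: "card (UNIV :: 'a::{field,finite} set) \<ge> 2"
proof -
  have "card {0::'a, 1} \<le> card (UNIV :: 'a set)" by (rule card_mono) auto
  then show ?thesis by simp
qed

context
  fixes emb :: "'a::field \<Rightarrow> 'b::field"
  assumes emb: "field_embedding emb"
begin

lemma field_embedding_add: "emb (x + y) = emb x + emb y"
  and field_embedding_mult: "emb (x * y) = emb x * emb y"
  using emb by (auto simp: field_embedding_def)

lemma field_embedding_zero: "emb 0 = 0"
  using field_embedding_add[of 0 0] by (metis add_cancel_right_right add_0)

lemma field_embedding_eq_zero_iff: "emb x = 0 \<longleftrightarrow> x = 0"
proof
  assume "emb x = 0"
  moreover have "x \<noteq> 0 \<Longrightarrow> emb x * emb (inverse x) = 1"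
    using emb by (simp add: field_embedding_def flip: field_embedding_mult)
  ultimately show "x = 0" by auto
qed (simp add: field_embedding_zero)

lemma field_embedding_sum: "emb (\<Sum>i\<in>I. f i) = (\<Sum>i\<in>I. emb (f i))"
  by (induction I rule: infinite_finite_induct)
    (auto simp: field_embedding_zero field_embedding_add)

lemma hamming_wt_map_vec_field_embedding: "hamming_wt (map_vec emb v) = hamming_wt v"
  unfolding hamming_wt_def by (rule arg_cong[where f = card]) (auto simp: field_embedding_eq_zero_iff)

lemma field_lift_mult_map_vec_eq_zero:
  assumes M: "M \<in> carrier_mat R n" and v: "v \<in> carrier_vec n" and Mv: "M *\<^sub>v v = 0\<^sub>v R"
  shows "field_lift emb s alpha M *\<^sub>v map_vec emb v = 0\<^sub>v (R div s)"
proof (rule eq_vecI)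
  fix k assume "k < dim_vec (0\<^sub>v (R div s) :: 'b vec)"
  then have k: "k < R div s" by simp
  have row: "k * s + t < R" if "t < s" for t
  proof -
    have "k * s + t < (k + 1) * s" using that by simp
    also have "\<dots> \<le> R div s * s" using k by (intro mult_right_mono) auto
    finally show ?thesis using div_times_less_eq_dividend[of R s] by linarith
  qed
  have "(field_lift emb s alpha M *\<^sub>v map_vec emb v) $ k
      = (\<Sum>l<n. (\<Sum>t<s. emb (M $$ (k * s + t, l)) * alpha ^ t) * emb (v $ l))"
    using k M v by (simp add: field_lift_def scalar_prod_def lessThan_atLeast0)
  also have "\<dots> = (\<Sum>t<s. alpha ^ t * emb (\<Sum>l<n. M $$ (k * s + t, l) * v $ l))"
    by (simp add: field_embedding_sum field_embedding_mult sum_distrib_left sum_distrib_right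
        sum.swap[of _ "{..<n}"] mult_ac)
  also have "\<dots> = 0"
  proof -
    have "(\<Sum>l<n. M $$ (k * s + t, l) * v $ l) = (M *\<^sub>v v) $ (k * s + t)" if "t < s" for t
      using row[OF that] M v by (simp add: scalar_prod_def lessThan_atLeast0)
    then show ?thesis
      using row Mv by (simp add: field_embedding_zero)
  qed
  finally show "(field_lift emb s alpha M *\<^sub>v map_vec emb v) $ k = 0\<^sub>v (R div s) $ k"
    using k by simp
qed (use M in \<open>simp add: field_lift_def\<close>)

end

lemma inj_on_generator_matrix:
  assumes "is_generator_matrix G N K D"
  shows "inj_on (\<lambda>u. G *\<^sub>v u) (carrier_vec K)"
proof (rule eq_card_imp_inj_on)
  have "gen_code G = (\<lambda>u. G *\<^sub>v u) ` carrier_vec K"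
    using assms by (auto simp: is_generator_matrix_def gen_code_def)
  then show "card ((\<lambda>u. G *\<^sub>v u) ` carrier_vec K) = card (carrier_vec K :: 'a vec set)"
    using assms by (simp add: is_generator_matrix_def card_carrier_vec)
qed simp

lemma min_dist_le_hamming_wt:
  assumes "0\<^sub>v N \<in> C" and "w \<in> C" and "w \<in> carrier_vec N" and "w \<noteq> 0\<^sub>v N"
  shows "min_dist C \<le> hamming_wt w"
proof -
  have "min_dist C \<le> hamming_dist w (0\<^sub>v N)"
    unfolding min_dist_def using assms by (intro cInf_lower) auto
  also have "hamming_dist w (0\<^sub>v N) = hamming_wt w"
    using assms(3) unfolding hamming_dist_def hamming_wt_def
    by (intro arg_cong[where f = card]) auto
  finally show ?thesis .
qed

lemma hamming_wt_diff_sparse_vecs: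
  fixes x x' :: "'a::ab_group_add vec"
  assumes "x \<in> sparse_vecs n b" and "x' \<in> sparse_vecs n b"
  shows "hamming_wt (x - x') \<le> 2 * b"
proof -
  have dim: "dim_vec x = n" "dim_vec x' = n"
    using assms by (auto simp: sparse_vecs_def)
  have "hamming_wt (x - x') \<le> card ({i. i < n \<and> x $ i \<noteq> 0} \<union> {i. i < n \<and> x' $ i \<noteq> 0})"
    unfolding hamming_wt_def using dim by (intro card_mono) auto
  also have "\<dots> \<le> hamming_wt x + hamming_wt x'"
    using dim card_Un_le unfolding hamming_wt_def by metis
  also have "\<dots> \<le> 2 * b"
    using assms by (simp add: sparse_vecs_def)
  finally show ?thesis .
qed

lemma inj_on_sparse_vecs_field_lift:
  fixes emb :: "'a::{field,finite} \<Rightarrow> 'b::{field,finite}"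
  assumes emb: "field_embedding emb"
    and M: "M \<in> carrier_mat R n"
    and H: "is_parity_check_matrix (field_lift emb s alpha M) n K d'"
    and "2 * b < d'"
  shows "inj_on (\<lambda>x. M *\<^sub>v x) (sparse_vecs n b)"
proof (rule inj_onI)
  fix x x' assume x: "x \<in> sparse_vecs n b" and x': "x' \<in> sparse_vecs n b"
    and eq: "M *\<^sub>v x = M *\<^sub>v x'"
  define v where "v = x - x'"
  define H where "H = field_lift emb s alpha M"
  have v: "v \<in> carrier_vec n" and Mv: "M *\<^sub>v v = 0\<^sub>v R"
    using x x' eq M by (auto simp: v_def sparse_vecs_def mult_minus_distrib_mat_vec)
  have dim_H: "dim_row H = R div s" "dim_col H = n"
    using M by (auto simp: H_def field_lift_def)
  have w: "map_vec emb v \<in> null_code H n"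
    using field_lift_mult_map_vec_eq_zero[OF emb M v Mv] v dim_H
    by (simp add: null_code_def H_def)
  have "0\<^sub>v n \<in> null_code H n"
    using dim_H by (auto simp: null_code_def)
  moreover have "hamming_wt (map_vec emb v) < min_dist (null_code H n)"
    using H hamming_wt_diff_sparse_vecs[OF x x'] \<open>2 * b < d'\<close>
    by (simp add: H_def is_parity_check_matrix_def hamming_wt_map_vec_field_embedding[OF emb] v_def)
  ultimately have "map_vec emb v = 0\<^sub>v n"
    using min_dist_le_hamming_wt[OF _ w] v by fastforce
  then have "v $ i = 0" if "i < n" for i
  proof -
    have "map_vec emb v $ i = 0"
      using that \<open>map_vec emb v = 0\<^sub>v n\<close> by simp
    then show ?thesis
      using that v by (simp add: field_embedding_eq_zero_iff[OF emb])
  qed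
  then show "x = x'"
    using x x' by (intro eq_vecI) (auto simp: v_def sparse_vecs_def)
qed

lemma sym_noise_prob_vCons:
  "sym_noise_prob lam (vCons a (v :: 'a::{zero,finite} vec)) =
     (if a = 0 then 1 - lam else lam / (real CARD('a) - 1)) * sym_noise_prob lam v"
  unfolding sym_noise_prob_def dim_vec_vCons prod.lessThan_Suc_shift by simp

lemma carrier_vec_Suc_eq_image_vCons:
  "carrier_vec (Suc N) = (\<lambda>(a, v). vCons a v) ` (UNIV \<times> carrier_vec N)"
proof (intro equalityI subsetI)
  fix w :: "'a vec" assume w: "w \<in> carrier_vec (Suc N)"
  have "w = vCons (w $ 0) (vec N (\<lambda>i. w $ Suc i))"
    using w by (intro eq_vecI) (auto simp: less_Suc_eq_0_disj)
  then show "w \<in> (\<lambda>(a, v). vCons a v) ` (UNIV \<times> carrier_vec N)"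
    by (intro rev_image_eqI[of "(w $ 0, vec N (\<lambda>i. w $ Suc i))"]) auto
qed auto

lemma inj_on_vCons: "inj_on (\<lambda>(a, v). vCons a v) X"
  by (rule inj_onI) auto

lemma sum_sym_noise_prob_carrier_vec:
  assumes "CARD('a::{zero,finite}) \<ge> 2"
  shows "(\<Sum>v \<in> (carrier_vec N :: 'a vec set). sym_noise_prob lam v) = 1"
proof (induction N)
  case 0
  have "(carrier_vec 0 :: 'a vec set) = {vNil}" by (auto intro: eq_vecI)
  then show ?case by (simp add: sym_noise_prob_def)
next
  case (Suc N)
  define f :: "'a \<Rightarrow> real" where "f a = (if a = 0 then 1 - lam else lam / (real CARD('a) - 1))" for a
  have "(\<Sum>v \<in> (carrier_vec (Suc N) :: 'a vec set). sym_noise_prob lam v)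
      = (\<Sum>(a, v) \<in> UNIV \<times> (carrier_vec N :: 'a vec set). f a * sym_noise_prob lam v)"
    unfolding carrier_vec_Suc_eq_image_vCons
    by (subst sum.reindex[OF inj_on_vCons]) (simp add: case_prod_beta sym_noise_prob_vCons f_def)
  also have "\<dots> = (\<Sum>a \<in> UNIV. f a)"
    using Suc by (simp add: sum.cartesian_product[symmetric] flip: sum_distrib_left)
  also have "\<dots> = f 0 + (\<Sum>a \<in> UNIV - {0}. f a)"
    by (simp add: sum.remove)
  also have "\<dots> = 1"
    using assms by (simp add: f_def card_Diff_singleton of_nat_diff)
  finally show ?case .
qed

lemma sym_noise_prob_nonneg:
  assumes "0 \<le> lam" "lam \<le> 1" "CARD('a::{zero,finite}) \<ge> 2"
  shows "0 \<le> sym_noise_prob lam (v :: 'a vec)"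
  unfolding sym_noise_prob_def using assms by (intro prod_nonneg) auto

lemma noise_event_prob_add_compl:
  assumes "CARD('a::{zero,finite}) \<ge> 2"
  shows "noise_event_prob lam N E + noise_event_prob lam N (\<lambda>e :: 'a vec. \<not> E e) = 1"
  unfolding noise_event_prob_def
    sum_sym_noise_prob_carrier_vec[OF assms, where N = N and lam = lam, symmetric]
  by (subst sum.union_disjoint[symmetric]) (auto intro: sum.cong)

lemma noise_event_prob_mono:
  assumes "0 \<le> lam" "lam \<le> 1" "CARD('a::{zero,finite}) \<ge> 2"
    and "\<And>e :: 'a vec. e \<in> carrier_vec N \<Longrightarrow> E e \<Longrightarrow> F e"
  shows "noise_event_prob lam N E \<le> noise_event_prob lam N F"
  unfolding noise_event_prob_def
  using assms sym_noise_prob_nonneg[OF assms(1-3)] by (intro sum_mono2) auto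

text \<open>Decode to the nearest codeword and pull it back along the encoding \<open>f\<close>.\<close>

lemma achieves_error_recovery:
  fixes C :: "'a::{field,finite} vec set" and f :: "'c \<Rightarrow> 'a vec"
  assumes C: "achieves_error C N lam Pe"
    and f: "inj_on f S" "f ` S \<subseteq> C"
    and lam: "0 \<le> lam" "lam \<le> 1"
  shows "\<exists>D. \<forall>x \<in> S. noise_event_prob lam N (\<lambda>e. D (f x + e) = x) \<ge> 1 - Pe"
proof -
  obtain dec where
    err: "\<And>c. c \<in> C \<Longrightarrow> noise_event_prob lam N (\<lambda>e. dec (c + e) \<noteq> c) \<le> Pe"
    using C by (auto simp: achieves_error_def)
  show ?thesis
  proof (intro exI ballI)
    fix x assume x: "x \<in> S"
    have "1 - Pe \<le> 1 - noise_event_prob lam N (\<lambda>e. dec (f x + e) \<noteq> f x)"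
      using err[of "f x"] x f(2) by auto
    also have "\<dots> = noise_event_prob lam N (\<lambda>e. dec (f x + e) = f x)"
      using noise_event_prob_add_compl[OF card_UNIV_field_ge_2,
          where lam = lam and N = N and E = "\<lambda>e. dec (f x + e) = f x"] by simp
    also have "\<dots> \<le> noise_event_prob lam N (\<lambda>e. inv_into S f (dec (f x + e)) = x)"
      using inv_into_f_f[OF f(1) x] lam by (intro noise_event_prob_mono card_UNIV_field_ge_2) simp_all
    finally show "1 - Pe \<le> noise_event_prob lam N (\<lambda>e. inv_into S f (dec (f x + e)) = x)" .
  qed
qed

lemma mult_mat_vec_select_rows:
  assumes "r ` {..<R} \<subseteq> {..<dim_row A}" and "A \<in> carrier_mat k n" and "x \<in> carrier_vec n"
  shows "mat R n (\<lambda>(i, j). A $$ (r i, j)) *\<^sub>v x = vec R (\<lambda>i. (A *\<^sub>v x) $ r i)"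
  using assms by (intro eq_vecI) (auto simp: scalar_prod_def)

lemma inj_on_sparse_vecs_sensing_matrix:
  fixes emb :: "'a::{field,finite} \<Rightarrow> 'b::{field,finite}"
  assumes emb: "field_embedding emb"
    and G: "is_generator_matrix G N K D" and A': "A' \<in> carrier_mat K n"
    and r: "r ` {..<R} \<subseteq> {..<K}"
    and H: "is_parity_check_matrix (field_lift emb s alpha (mat R n (\<lambda>(i, j). A' $$ (r i, j)))) n K' d'"
    and "2 * b < d'"
  shows "inj_on (\<lambda>x. (G * A') *\<^sub>v x) (sparse_vecs n b)"
proof (rule inj_onI)
  fix x x' assume x: "x \<in> sparse_vecs n b" and x': "x' \<in> sparse_vecs n b"
    and eq: "(G * A') *\<^sub>v x = (G * A') *\<^sub>v x'"
  have xc: "x \<in> carrier_vec n" "x' \<in> carrier_vec n"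
    using x x' by (auto simp: sparse_vecs_def)
  have G_carrier: "G \<in> carrier_mat N K"
    using G by (simp add: is_generator_matrix_def)
  have "A' *\<^sub>v x = A' *\<^sub>v x'"
    using inj_on_generator_matrix[OF G] eq xc A' G_carrier by (auto dest: inj_onD)
  then have "mat R n (\<lambda>(i, j). A' $$ (r i, j)) *\<^sub>v x = mat R n (\<lambda>(i, j). A' $$ (r i, j)) *\<^sub>v x'"
    using r A' xc by (simp add: mult_mat_vec_select_rows)
  then show "x = x'"
    using inj_on_sparse_vecs_field_lift[OF emb mat_carrier H \<open>2 * b < d'\<close>] x x'
    by (auto dest: inj_onD)
qed

theorem theorem2:
  fixes emb :: "'a::{field,finite} \<Rightarrow> 'b::{field,finite}"
    and alpha :: 'b and p :: "'a poly"
    and lam Pe :: real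
    and b n m m' m'' s c d d' :: nat
    and G A' A :: "'a mat"
  assumes "0 < b" and "b < n"
    and "card (UNIV :: 'b set) = card (UNIV :: 'a set) ^ s"
    and "field_embedding emb"
    and "primitive_poly_root emb s p alpha"
    and "0 < lam" and "lam < 1 - 1 / real (card (UNIV :: 'a set))"
    and "m = c * m'" and "c * m'' * s \<le> m"
    and "real c > 1 / (1 - Hq (card (UNIV :: 'a set)) lam)"
    and "is_generator_matrix G m m' d"
    and "achieves_error (gen_code G) m lam Pe"
    and "A' \<in> carrier_mat m' n"
    and "A = G * A'"
    and "\<exists>r. inj_on r {..<m'' * s} \<and> r ` {..<m'' * s} \<subseteq> {..<m'} \<and>
           is_parity_check_matrix
             (field_lift emb s alpha (mat (m'' * s) n (\<lambda>(i, j). A' $$ (r i, j))))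
             n (n - m'') d'"
    and "d' > 2 * b"
  shows "\<exists>D. \<forall>x \<in> sparse_vecs n b.
           noise_event_prob lam m (\<lambda>e. D (A *\<^sub>v x + e) = x) \<ge> 1 - Pe"
proof (rule achieves_error_recovery)
  show "achieves_error (gen_code G) m lam Pe" by fact
  obtain r where r: "r ` {..<m'' * s} \<subseteq> {..<m'}" and
    H: "is_parity_check_matrix (field_lift emb s alpha (mat (m'' * s) n (\<lambda>(i, j). A' $$ (r i, j))))
       n (n - m'') d'"
    using assms(15) by blast
  show "inj_on (\<lambda>x. A *\<^sub>v x) (sparse_vecs n b)"
    using inj_on_sparse_vecs_sensing_matrix[OF assms(4,11,13) r H assms(16)] assms(14) by simp
  have G: "G \<in> carrier_mat m m'"
    using assms(11) by (simp add: is_generator_matrix_def)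
  have "A *\<^sub>v x = G *\<^sub>v (A' *\<^sub>v x)" and "A' *\<^sub>v x \<in> carrier_vec (dim_col G)"
    if "x \<in> sparse_vecs n b" for x
    using that G assms(13,14) by (auto simp: sparse_vecs_def)
  then show "(\<lambda>x. A *\<^sub>v x) ` sparse_vecs n b \<subseteq> gen_code G"
    unfolding gen_code_def by blast
  show "0 \<le> lam" using assms(6) by simp
  have "0 \<le> 1 / real (card (UNIV :: 'a set))" by simp
  then show "lam \<le> 1" using assms(7) by linarith
qed

end
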